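(* Let $p\in\mathcal M_1^+$ with generating function $\psi(z)=\sum_{k\ge0}p_kz^k$, and let $\mathcal R_1(\psi)(z)=\sum_{k\ge0}\mathcal R_1(p)_kz^k$, where $\mathcal R_1(p)_i=\sum_{k,\ell\ge0,\ k+\ell\ge i}\frac{1+\min\{k,\ell,i,k+\ell-i\}}{(k+1)(\ell+1)}p_kp_\ell$. Then the radii of convergence satisfy $\rho(\mathcal R_1(\psi))\ge\rho(\psi)$.
   Context: $\mathcal M_1^+$ is the set of probability measures on $\mathbb N_0$, identified with nonnegative sequences summing to $1$. $\rho(f)$ denotes the radius of convergence of a power series $f$ around $0$. *)

theory Defs
  imports "HOL-Analysis.Analysis"
begin

text \<open>Probability measures on N_0, as nonnegative sequences summing to 1.\<close>
definition prob_seq :: "(nat \<Rightarrow> real) \<Rightarrow> bool" where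
  "prob_seq p \<longleftrightarrow> (\<forall>k. 0 \<le> p k) \<and> p sums 1"

definition R1 :: "(nat \<Rightarrow> real) \<Rightarrow> nat \<Rightarrow> real" where
  "R1 p i = (\<Sum>\<^sub>\<infinity>(k, l)\<in>{(k, l). i \<le> k + l}.
      (1 + real (min (min k l) (min i (k + l - i)))) / (real (k + 1) * real (l + 1)) * p k * p l)"

end

theory Submission
  imports Defs
begin

text \<open>The weight of the pair (k, l) in R_1 is at most 1, and for k + l \<ge> i we have
  s^i \<le> 1 + s^(k+l). Hence every term of R_1(p)_i s^i is dominated by the majorant
  p_k p_l + (p_k s^k)(p_l s^l), whose double sum is 1 + \<psi>(s)^2 for any 0 \<le> s < \<rho>(\<psi>).
  So the coefficients of R_1(\<psi>) grow at most like s^-i, which forces \<rho>(R_1(\<psi>)) \<ge> s.\<close>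

lemma has_sum_product_nonneg:
  fixes f :: "'a \<Rightarrow> real" and g :: "'b \<Rightarrow> real"
  assumes f: "(f has_sum a) A" and g: "(g has_sum b) B"
    and f_nonneg: "\<And>x. x \<in> A \<Longrightarrow> 0 \<le> f x" and g_nonneg: "\<And>y. y \<in> B \<Longrightarrow> 0 \<le> g y"
  shows "((\<lambda>(x, y). f x * g y) has_sum a * b) (A \<times> B)"
proof (rule has_sum_SigmaI)
  show rows: "((\<lambda>y. (\<lambda>(x, y). f x * g y) (x, y)) has_sum f x * b) B" for x
    using has_sum_cmult_right[OF g] by simp
  show "((\<lambda>x. f x * b) has_sum a * b) A"
    using has_sum_cmult_left[OF f] by simp
  show "(\<lambda>(x, y). f x * g y) summable_on A \<times> B"
  proof (rule summable_on_SigmaI)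
    show "((\<lambda>y. (\<lambda>(x, y). f x * g y) (x, y)) has_sum f x * b) B" for x
      by (rule rows)
    show "(\<lambda>x. f x * b) summable_on A"
      using has_sum_cmult_left[OF f] by (auto simp: summable_on_def)
  qed (simp add: f_nonneg g_nonneg)
qed

lemma conv_radius_geI_bounded:
  fixes a :: "nat \<Rightarrow> 'a :: {banach, real_normed_div_algebra}"
  assumes "0 \<le> s" and bounded: "\<And>n. norm (a n) * s ^ n \<le> C"
  shows "conv_radius a \<ge> ereal s"
proof (rule conv_radius_geI_ex')
  fix r :: real
  assume r: "0 < r" "ereal r < ereal s"
  then have "0 < s" by simp
  have "summable (\<lambda>n. C * (r / s) ^ n)"
    using r \<open>0 < s\<close> by (intro summable_mult summable_geometric) auto
  then show "summable (\<lambda>n. a n * of_real r ^ n)"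
  proof (rule summable_comparison_test')
    fix n :: nat
    have "norm (a n * of_real r ^ n) = (norm (a n) * s ^ n) * (r / s) ^ n"
      using r \<open>0 < s\<close> by (simp add: norm_mult norm_power power_divide)
    also have "\<dots> \<le> C * (r / s) ^ n"
      using bounded r \<open>0 < s\<close> by (intro mult_right_mono) auto
    finally show "norm (a n * of_real r ^ n) \<le> C * (r / s) ^ n" .
  qed
qed

lemma power_le_one_add_power:
  fixes s :: real
  assumes "0 \<le> s" "i \<le> n"
  shows "s ^ i \<le> 1 + s ^ n"
proof (cases "s \<le> 1")
  case True
  then have "s ^ i \<le> 1" using assms by (simp add: power_le_one)
  then show ?thesis using assms by (simp add: add_increasing2)
next
  case False
  then have "s ^ i \<le> s ^ n" using assms by (intro power_increasing) auto
  then show ?thesis by simp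
qed

definition R1_weight :: "nat \<Rightarrow> nat \<Rightarrow> nat \<Rightarrow> real" where
  "R1_weight i k l = (1 + real (min (min k l) (min i (k + l - i)))) / (real (k + 1) * real (l + 1))"

lemma R1_eq_infsum_weight:
  "R1 p i = (\<Sum>\<^sub>\<infinity>(k, l)\<in>{(k, l). i \<le> k + l}. R1_weight i k l * p k * p l)"
  unfolding R1_def R1_weight_def by (rule refl)

lemma R1_weight_nonneg: "0 \<le> R1_weight i k l"
  by (simp add: R1_weight_def)

lemma R1_weight_le_1: "R1_weight i k l \<le> 1"
proof -
  have "1 + real (min (min k l) (min i (k + l - i))) \<le> real (k + 1)" by simp
  also have "\<dots> \<le> real (k + 1) * real (l + 1)" by simp
  finally show ?thesis by (simp add: R1_weight_def divide_le_eq)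
qed

lemma R1_weight_mult_power_le:
  fixes a b s :: real
  assumes "0 \<le> a" "0 \<le> b" "0 \<le> s" "i \<le> k + l"
  shows "R1_weight i k l * a * b * s ^ i \<le> a * b + (a * s ^ k) * (b * s ^ l)"
proof -
  have ab: "0 \<le> a * b"
    using assms by simp
  have "R1_weight i k l * a * b * s ^ i = R1_weight i k l * (a * b * s ^ i)"
    by (simp add: mult_ac)
  also have "\<dots> \<le> a * b * s ^ i"
    using mult_right_mono[OF R1_weight_le_1, of "a * b * s ^ i"] ab \<open>0 \<le> s\<close> by simp
  also have "\<dots> \<le> a * b * (1 + s ^ (k + l))"
    by (intro mult_left_mono power_le_one_add_power) (use ab assms in auto)
  also have "\<dots> = a * b + (a * s ^ k) * (b * s ^ l)"
    by (simp add: power_add algebra_simps)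
  finally show ?thesis .
qed

lemma R1_nonneg:
  assumes "prob_seq p"
  shows "0 \<le> R1 p i"
  using assms unfolding R1_eq_infsum_weight prob_seq_def
  by (intro infsum_nonneg) (auto intro!: mult_nonneg_nonneg R1_weight_nonneg)

definition R1_majorant :: "(nat \<Rightarrow> real) \<Rightarrow> real \<Rightarrow> nat \<times> nat \<Rightarrow> real" where
  "R1_majorant p s = (\<lambda>(k, l). p k * p l + (p k * s ^ k) * (p l * s ^ l))"

lemma has_sum_R1_majorant:
  assumes "prob_seq p" "0 \<le> s" and \<psi>: "(\<lambda>n. p n * s ^ n) sums \<psi>"
  shows "(R1_majorant p s has_sum 1 + \<psi>\<^sup>2) UNIV"
proof -
  have p_nonneg: "0 \<le> p n" for n
    using assms(1) by (simp add: prob_seq_def)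
  have \<psi>_nonneg: "0 \<le> p n * s ^ n" for n
    using p_nonneg \<open>0 \<le> s\<close> by simp
  have p_sum: "(p has_sum 1) UNIV"
    using assms(1) by (auto simp: prob_seq_def intro: sums_nonneg_imp_has_sum)
  have \<psi>_sum: "((\<lambda>n. p n * s ^ n) has_sum \<psi>) UNIV"
    using \<psi> \<psi>_nonneg by (rule sums_nonneg_imp_has_sum)
  have pp_sum: "((\<lambda>(k, l). p k * p l) has_sum 1) UNIV"
    using has_sum_product_nonneg[OF p_sum p_sum p_nonneg p_nonneg] by simp
  have \<psi>\<psi>_sum: "((\<lambda>(k, l). (p k * s ^ k) * (p l * s ^ l)) has_sum \<psi>\<^sup>2) UNIV"
    using has_sum_product_nonneg[OF \<psi>_sum \<psi>_sum \<psi>_nonneg \<psi>_nonneg]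
    by (simp add: power2_eq_square)
  have "R1_majorant p s =
      (\<lambda>x. (\<lambda>(k, l). p k * p l) x + (\<lambda>(k, l). (p k * s ^ k) * (p l * s ^ l)) x)"
    by (auto simp: R1_majorant_def)
  then show ?thesis
    using has_sum_add[OF pp_sum \<psi>\<psi>_sum] by simp
qed

lemma R1_mult_power_le:
  assumes "prob_seq p" "0 \<le> s" and \<psi>: "(\<lambda>n. p n * s ^ n) sums \<psi>"
  shows "R1 p i * s ^ i \<le> 1 + \<psi>\<^sup>2"
proof -
  define S where "S = {(k :: nat, l :: nat). i \<le> k + l}"
  define f where "f = (\<lambda>(k, l). R1_weight i k l * p k * p l * s ^ i)"
  have p_nonneg: "0 \<le> p k" for k
    using assms(1) by (simp add: prob_seq_def)
  have majorant: "(R1_majorant p s has_sum 1 + \<psi>\<^sup>2) UNIV"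
    using assms by (rule has_sum_R1_majorant)
  have majorant_nonneg: "0 \<le> R1_majorant p s x" for x
    using p_nonneg \<open>0 \<le> s\<close> by (simp add: R1_majorant_def case_prod_unfold)
  have f_nonneg: "0 \<le> f x" for x
    using p_nonneg \<open>0 \<le> s\<close> R1_weight_nonneg by (simp add: f_def case_prod_unfold)
  have f_le: "f x \<le> R1_majorant p s x" if "x \<in> S" for x
    using that p_nonneg \<open>0 \<le> s\<close>
    by (auto simp: S_def f_def R1_majorant_def intro!: R1_weight_mult_power_le)
  have "R1 p i * s ^ i = (\<Sum>\<^sub>\<infinity>x\<in>S. (\<lambda>(k, l). R1_weight i k l * p k * p l) x * s ^ i)"
    unfolding R1_eq_infsum_weight S_def by (simp only: infsum_cmult_left')
  also have "\<dots> = infsum f S"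
    by (rule infsum_cong) (auto simp: f_def)
  also have "\<dots> \<le> infsum (R1_majorant p s) UNIV"
  proof (rule infsum_mono_neutral)
    show majorant_summable: "R1_majorant p s summable_on UNIV"
      using majorant by (rule has_sum_imp_summable)
    have "R1_majorant p s summable_on S"
      using majorant_summable by (rule summable_on_subset_banach) simp
    then show "f summable_on S"
      by (rule summable_on_comparison_test) (use f_le f_nonneg in auto)
  qed (use f_le majorant_nonneg in auto)
  also have "\<dots> = 1 + \<psi>\<^sup>2"
    using majorant by (rule infsumI)
  finally show ?thesis .
qed

theorem lemma7:
  fixes p :: "nat \<Rightarrow> real"
  assumes "prob_seq p"
  shows "conv_radius (R1 p) \<ge> conv_radius p"
proof (rule dense_le)
  fix t :: ereal
  assume t: "t < conv_radius p"
  show "t \<le> conv_radius (R1 p)"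
  proof (cases "t < 0")
    case True
    then show ?thesis using conv_radius_nonneg[of "R1 p"] by simp
  next
    case False
    with t obtain s where s: "t = ereal s" "0 \<le> s"
      by (cases t) auto
    then have "(\<lambda>n. p n * s ^ n) sums (\<Sum>n. p n * s ^ n)"
      using summable_in_conv_radius[of s p] t by (intro summable_sums) simp
    then have "norm (R1 p n) * s ^ n \<le> 1 + (\<Sum>n. p n * s ^ n)\<^sup>2" for n
      using R1_mult_power_le[OF assms \<open>0 \<le> s\<close>] R1_nonneg[OF assms] by simp
    then show ?thesis
      using conv_radius_geI_bounded[OF \<open>0 \<le> s\<close>] s by blast
  qed
qed

end
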